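(* Let $r_1=(y_1,y_1'),\ r_2=(y_2,y_2')\in\mathbb{N}_0^n\times\mathbb{N}_0^n$ and $r_1\oplus r_2=(y,y')$. Then (i) $y'-y=(y_1'-y_1)+(y_2'-y_2)$; (ii) for every $x\in\mathbb{N}_0^n$: $x\ge y$ if and only if $x\ge y_1$ and $x+(y_1'-y_1)\ge y_2$; (iii) for every $x\in\mathbb{N}_0^n$: $x\ge y'$ if and only if $x\ge y_2'$ and $x+(y_2-y_2')\ge y_1'$. Conversely, if $\odot$ is any binary operation on $\mathbb{N}_0^n\times\mathbb{N}_0^n$ such that for all $r_1,r_2$, writing $r_1\odot r_2=(y,y')$, properties (i) and (ii) hold, or alternatively properties (i) and (iii) hold, then $\odot=\oplus$.
   Context: For $x,y\in\mathbb{Z}^n$, $x\le y$ means $x^i\le y^i$ for all $i$; $x\vee y$ is the componentwise maximum. For $r_1=(y_1,y_1'),\ r_2=(y_2,y_2')\in\mathbb{N}_0^n\times\mathbb{N}_0^n$ define $r_1\oplus r_2=(y,y')$ with $y=y_1+0\vee(y_2-y_1')$ and $y'=y_2'+0\vee(y_1'-y_2)$. *)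

theory Defs
  imports Main
begin

text \<open>Elements of N_0^n are modelled as functions from a finite index type 'n to nat
  (n = CARD('n), arbitrary). The order on functions is the pointwise order, and
  differences are taken in the integers.\<close>

type_synonym 'n pr = "('n \<Rightarrow> nat) \<times> ('n \<Rightarrow> nat)"

definition oplus :: "'n pr \<Rightarrow> 'n pr \<Rightarrow> 'n pr" where
  "oplus r1 r2 = (case r1 of (y1, y1') \<Rightarrow> case r2 of (y2, y2') \<Rightarrow>
     ((\<lambda>i. y1 i + nat (max 0 (int (y2 i) - int (y1' i)))),
      (\<lambda>i. y2' i + nat (max 0 (int (y1' i) - int (y2 i))))))"

definition prop_i :: "'n pr \<Rightarrow> 'n pr \<Rightarrow> 'n pr \<Rightarrow> bool" where
  "prop_i r1 r2 r = (\<forall>i.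
     int (snd r i) - int (fst r i) =
     (int (snd r1 i) - int (fst r1 i)) + (int (snd r2 i) - int (fst r2 i)))"

definition prop_ii :: "'n pr \<Rightarrow> 'n pr \<Rightarrow> 'n pr \<Rightarrow> bool" where
  "prop_ii r1 r2 r = (\<forall>x :: 'n \<Rightarrow> nat.
     (fst r \<le> x) \<longleftrightarrow>
     (fst r1 \<le> x \<and> (\<forall>i. int (fst r2 i) \<le> int (x i) + (int (snd r1 i) - int (fst r1 i)))))"

definition prop_iii :: "'n pr \<Rightarrow> 'n pr \<Rightarrow> 'n pr \<Rightarrow> bool" where
  "prop_iii r1 r2 r = (\<forall>x :: 'n \<Rightarrow> nat.
     (snd r \<le> x) \<longleftrightarrow>
     (snd r2 \<le> x \<and> (\<forall>i. int (snd r1 i) \<le> int (x i) + (int (fst r2 i) - int (snd r2 i)))))"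

end

theory Submission
  imports Defs
begin

text \<open>Property (ii) characterises y as the least element of an up-closed set, so (ii) alone
  determines y; property (i) then determines y' from y. Symmetrically, (iii) determines y'
  and (i) then determines y.\<close>

lemma oplus_Pair:
  "oplus (y1, y1') (y2, y2') = ((\<lambda>i. y1 i + (y2 i - y1' i)), (\<lambda>i. y2' i + (y1' i - y2 i)))"
  unfolding oplus_def by (simp add: fun_eq_iff max_def nat_diff_distrib)

lemma add_diff_le_iff:
  fixes a b c x :: nat
  shows "a + (c - b) \<le> x \<longleftrightarrow> a \<le> x \<and> int c \<le> int x + (int b - int a)"
  by linarith

lemma prop_i_oplus: "prop_i r1 r2 (oplus r1 r2)"
  by (cases r1; cases r2) (auto simp: prop_i_def oplus_Pair)

lemma prop_ii_oplus: "prop_ii r1 r2 (oplus r1 r2)"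
  by (cases r1; cases r2)
    (simp add: prop_ii_def oplus_Pair le_fun_def add_diff_le_iff all_conj_distrib)

lemma prop_iii_oplus: "prop_iii r1 r2 (oplus r1 r2)"
  by (cases r1; cases r2)
    (simp add: prop_iii_def oplus_Pair le_fun_def add_diff_le_iff all_conj_distrib)

lemma eq_if_same_upper_bounds:
  fixes a b :: "'a::order"
  assumes "\<And>x. a \<le> x \<longleftrightarrow> b \<le> x"
  shows "a = b"
  using assms by (meson order.antisym order.refl)

lemma prop_i_same_differences:
  assumes "prop_i r1 r2 r" "prop_i r1 r2 s"
  shows "int (snd r i) - int (fst r i) = int (snd s i) - int (fst s i)"
  using assms unfolding prop_i_def by metis

lemma prop_i_prop_ii_unique:
  assumes "prop_i r1 r2 r" "prop_ii r1 r2 r"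
  shows "r = oplus r1 r2"
proof -
  have fst_eq: "fst r = fst (oplus r1 r2)"
    by (rule eq_if_same_upper_bounds)
      (use assms(2) prop_ii_oplus[of r1 r2] in \<open>simp add: prop_ii_def\<close>)
  have "snd r i = snd (oplus r1 r2) i" for i
    using prop_i_same_differences[OF assms(1) prop_i_oplus, of i] fst_eq by simp
  with fst_eq show ?thesis by (simp add: prod_eq_iff fun_eq_iff)
qed

lemma prop_i_prop_iii_unique:
  assumes "prop_i r1 r2 r" "prop_iii r1 r2 r"
  shows "r = oplus r1 r2"
proof -
  have snd_eq: "snd r = snd (oplus r1 r2)"
    by (rule eq_if_same_upper_bounds)
      (use assms(2) prop_iii_oplus[of r1 r2] in \<open>simp add: prop_iii_def\<close>)
  have "fst r i = fst (oplus r1 r2) i" for i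
    using prop_i_same_differences[OF assms(1) prop_i_oplus, of i] snd_eq by simp
  with snd_eq show ?thesis by (simp add: prod_eq_iff fun_eq_iff)
qed

theorem proposition2p4:
  shows "(\<forall>r1 r2 :: ('n::finite) pr.
            prop_i r1 r2 (oplus r1 r2) \<and> prop_ii r1 r2 (oplus r1 r2) \<and> prop_iii r1 r2 (oplus r1 r2))
       \<and> (\<forall>odot :: 'n pr \<Rightarrow> 'n pr \<Rightarrow> 'n pr.
            (\<forall>r1 r2. prop_i r1 r2 (odot r1 r2) \<and> prop_ii r1 r2 (odot r1 r2)) \<longrightarrow> odot = oplus)
       \<and> (\<forall>odot :: 'n pr \<Rightarrow> 'n pr \<Rightarrow> 'n pr.
            (\<forall>r1 r2. prop_i r1 r2 (odot r1 r2) \<and> prop_iii r1 r2 (odot r1 r2)) \<longrightarrow> odot = oplus)"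
  using prop_i_oplus prop_ii_oplus prop_iii_oplus prop_i_prop_ii_unique prop_i_prop_iii_unique
  by blast

end
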